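(* Let $\mathrm b_1,\mathrm b_2$ be two profiles, and let $L^{\mathrm b_1},L^{\mathrm b_2}$ be constructed from the same environment $\omega$. Let $k\le l$ be integers and $n\ge 1$. If $Z^{\mathrm b_1}[l]_n\le Z^{\mathrm b_2}[k]_n$, then $$L^{\mathrm b_1}[l]_n-L^{\mathrm b_1}[k]_n\le L^{\mathrm b_2}[l]_n-L^{\mathrm b_2}[k]_n .$$
   Context: Let $\omega=\{\omega_{i,j}:(i,j)\in\mathbb Z^2,\ i+j>0\}$ be i.i.d. exponential random variables with parameter $1$. Write $(i,j)\le(k,l)$ if $i\le k$ and $j\le l$. An up-right path from $\mathbf x$ to $\mathbf y$ is a sequence $\mathbf x=\mathbf x_0,\dots,\mathbf x_m=\mathbf y$ with increments in $\{(1,0),(0,1)\}$; its passage time is $\sum_{i=1}^m\omega_{\mathbf x_i}$ (starting point excluded). For $\mathbf x=(i,j)\le\mathbf y$ with $i+j\ge0$, $L(\mathbf x,\mathbf y)$ is the maximal passage time over up-right paths from $\mathbf x$ to $\mathbf y$. Set $L_k(\mathbf x)=L((k,-k),\mathbf x)$, $C^{\mathbf x}=\{k\in\mathbb Z:(k,-k)\le\mathbf x\}$ and $[k]_n:=(n+k,n-k)$. A profile is a function $\mathrm b:\mathbb Z\to\mathbb R\cup\{-\infty\}$ with $\mathrm b(0)=0$. Define $L^{\mathrm b}(\mathbf x):=\max_{k\in C^{\mathbf x}}\{\mathrm b(k)+L_k(\mathbf x)\}$ and the exit point $Z^{\mathrm b}(\mathbf x)$ as the largest $k\in C^{\mathbf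 x}$ attaining this maximum. *)

theory Defs
  imports "HOL-Analysis.Analysis"
begin

type_synonym point = "int \<times> int"

definition pt_le :: "point \<Rightarrow> point \<Rightarrow> bool" where
  "pt_le x y \<longleftrightarrow> fst x \<le> fst y \<and> snd x \<le> snd y"

definition up_right_path :: "point \<Rightarrow> point \<Rightarrow> point list \<Rightarrow> bool" where
  "up_right_path x y p \<longleftrightarrow> p \<noteq> [] \<and> hd p = x \<and> last p = y \<and>
     (\<forall>i. Suc i < length p \<longrightarrow>
        p ! Suc i = (fst (p ! i) + 1, snd (p ! i)) \<or> p ! Suc i = (fst (p ! i), snd (p ! i) + 1))"

text \<open>Passage time: sum of weights, starting point excluded.\<close>
definition passage_time :: "(point \<Rightarrow> real) \<Rightarrow> point list \<Rightarrow> real" where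
  "passage_time \<omega> p = sum_list (map \<omega> (tl p))"

definition LPP :: "(point \<Rightarrow> real) \<Rightarrow> point \<Rightarrow> point \<Rightarrow> real" where
  "LPP \<omega> x y = Max (passage_time \<omega> ` {p. up_right_path x y p})"

definition Lk :: "(point \<Rightarrow> real) \<Rightarrow> int \<Rightarrow> point \<Rightarrow> real" where
  "Lk \<omega> k x = LPP \<omega> (k, -k) x"

definition Cset :: "point \<Rightarrow> int set" where
  "Cset x = {k. pt_le (k, -k) x}"

definition diag_pt :: "int \<Rightarrow> nat \<Rightarrow> point" where
  "diag_pt k n = (int n + k, int n - k)"

text \<open>Profiles: functions Z \<rightarrow> R \<union> {-\<infinity>} with b(0) = 0, modelled in ereal.\<close>
definition profile :: "(int \<Rightarrow> ereal) \<Rightarrow> bool" where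
  "profile b \<longleftrightarrow> b 0 = 0 \<and> (\<forall>k. b k \<noteq> \<infinity>)"

definition Lb :: "(point \<Rightarrow> real) \<Rightarrow> (int \<Rightarrow> ereal) \<Rightarrow> point \<Rightarrow> ereal" where
  "Lb \<omega> b x = Max ((\<lambda>k. b k + ereal (Lk \<omega> k x)) ` Cset x)"

definition Zb :: "(point \<Rightarrow> real) \<Rightarrow> (int \<Rightarrow> ereal) \<Rightarrow> point \<Rightarrow> int" where
  "Zb \<omega> b x = Max {k \<in> Cset x. b k + ereal (Lk \<omega> k x) = Lb \<omega> b x}"

end

theory Submission
  imports Defs
begin

text \<open>Let \<open>z\<^sub>1 = Z\<^sup>b\<^sup>1[l]\<^sub>n \<le> z\<^sub>2 = Z\<^sup>b\<^sup>2[k]\<^sub>n\<close>. A geodesic from \<open>(z\<^sub>1,-z\<^sub>1)\<close> to \<open>[l]\<^sub>n\<close> and one from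
  \<open>(z\<^sub>2,-z\<^sub>2)\<close> to \<open>[k]\<^sub>n\<close> must cross, so exchanging their tails after a common vertex gives
  \<open>L\<^sub>z\<^sub>1[l]\<^sub>n + L\<^sub>z\<^sub>2[k]\<^sub>n \<le> L\<^sub>z\<^sub>1[k]\<^sub>n + L\<^sub>z\<^sub>2[l]\<^sub>n\<close>. Adding \<open>b\<^sub>1(z\<^sub>1) + b\<^sub>2(z\<^sub>2)\<close>, the left side becomes
  \<open>L\<^sup>b\<^sup>1[l]\<^sub>n + L\<^sup>b\<^sup>2[k]\<^sub>n\<close>, and the right side is at most \<open>L\<^sup>b\<^sup>1[k]\<^sub>n + L\<^sup>b\<^sup>2[l]\<^sub>n\<close> by maximality.\<close>

lemma up_right_path_step:
  "up_right_path x y p \<Longrightarrow> Suc i < length p \<Longrightarrow>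
     p ! Suc i = (fst (p ! i) + 1, snd (p ! i)) \<or> p ! Suc i = (fst (p ! i), snd (p ! i) + 1)"
  by (simp add: up_right_path_def)

lemma up_right_path_nth_level:
  assumes "up_right_path x y p" "j < length p"
  shows "fst (p ! j) + snd (p ! j) = fst x + snd x + int j"
  using assms(2)
proof (induction j)
  case 0
  then show ?case using assms(1) by (simp add: up_right_path_def hd_conv_nth[symmetric])
next
  case (Suc j)
  then show ?case using up_right_path_step[OF assms(1), of j] by auto
qed

lemma up_right_path_length:
  assumes "up_right_path x y p"
  shows "int (length p) = fst y + snd y - fst x - snd x + 1"
proof -
  have ne: "p \<noteq> []" and "y = p ! (length p - 1)"
    using assms by (auto simp: up_right_path_def last_conv_nth)
  then show ?thesis
    using up_right_path_nth_level[OF assms, of "length p - 1"] by (cases "length p") auto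
qed

lemma up_right_path_nth_mono:
  assumes "up_right_path x y p" "i \<le> j" "j < length p"
  shows "pt_le (p ! i) (p ! j)"
  using assms(2,3)
proof (induction j rule: dec_induct)
  case base
  then show ?case by (simp add: pt_le_def)
next
  case (step j)
  then show ?case using up_right_path_step[OF assms(1), of j] by (auto simp: pt_le_def)
qed

lemma finite_up_right_paths: "finite {p. up_right_path x y p}"
proof -
  let ?B = "{fst x..fst y} \<times> {snd x..snd y}"
  let ?N = "nat (fst y + snd y - fst x - snd x + 1)"
  have "{p. up_right_path x y p} \<subseteq> {p. set p \<subseteq> ?B \<and> length p = ?N}"
  proof clarify
    fix p assume p: "up_right_path x y p"
    have ne: "p \<noteq> []" and first: "p ! 0 = x" and final: "p ! (length p - 1) = y"
      using p by (auto simp: up_right_path_def hd_conv_nth last_conv_nth)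
    have "set p \<subseteq> ?B"
    proof
      fix v assume "v \<in> set p"
      then obtain i where i: "i < length p" "v = p ! i" by (auto simp: in_set_conv_nth)
      then show "v \<in> ?B"
        using up_right_path_nth_mono[OF p, of 0 i] up_right_path_nth_mono[OF p, of i "length p - 1"]
          first final by (auto simp: pt_le_def mem_Times_iff)
    qed
    then show "set p \<subseteq> ?B \<and> length p = ?N" using up_right_path_length[OF p] by simp
  qed
  moreover have "finite {p. set p \<subseteq> ?B \<and> length p = ?N}"
    by (rule finite_lists_length_eq) simp
  ultimately show ?thesis by (rule finite_subset)
qed

lemma up_right_path_Cons:
  assumes "up_right_path x' y p" "x' = (fst x + 1, snd x) \<or> x' = (fst x, snd x + 1)"
  shows "up_right_path x y (x # p)"
  using assms unfolding up_right_path_def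
  by (auto simp: nth_Cons hd_conv_nth split: nat.split)

lemma up_right_path_exists:
  assumes "pt_le x y"
  shows "\<exists>p. up_right_path x y p"
  using assms
proof (induction "nat (fst y + snd y - fst x - snd x)" arbitrary: x)
  case 0
  then have "x = y" by (auto simp: pt_le_def prod_eq_iff)
  then show ?case by (intro exI[of _ "[y]"]) (simp add: up_right_path_def)
next
  case (Suc d)
  define x' where "x' = (if fst x < fst y then (fst x + 1, snd x) else (fst x, snd x + 1))"
  have "pt_le x' y" "d = nat (fst y + snd y - fst x' - snd x')"
    using Suc.hyps(2) Suc.prems by (auto simp: x'_def pt_le_def)
  then obtain p where "up_right_path x' y p" using Suc.hyps(1) by blast
  then show ?case by (intro exI, rule up_right_path_Cons) (auto simp: x'_def)
qed

lemma passage_time_eq_sum: "passage_time \<omega> p = (\<Sum>t = 1..<length p. \<omega> (p ! t))"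
proof -
  have "passage_time \<omega> p = (\<Sum>i = 0..<length p - 1. \<omega> (p ! Suc i))"
    unfolding passage_time_def by (simp add: sum_list_sum_nth nth_tl atLeast0LessThan)
  also have "\<dots> = (\<Sum>t = 1..<length p. \<omega> (p ! t))"
    using sum.shift_bounds_Suc_ivl[of "\<lambda>t. \<omega> (p ! t)" 0 "length p - 1"]
    by (cases "length p") simp_all
  finally show ?thesis .
qed

lemma LPP_ge: "up_right_path x y p \<Longrightarrow> passage_time \<omega> p \<le> LPP \<omega> x y"
  unfolding LPP_def by (rule Max_ge) (use finite_up_right_paths in auto)

lemma LPP_attained:
  assumes "pt_le x y"
  obtains p where "up_right_path x y p" "LPP \<omega> x y = passage_time \<omega> p"
proof -
  have "{p. up_right_path x y p} \<noteq> {}" using up_right_path_exists[OF assms] by blast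
  then have "LPP \<omega> x y \<in> passage_time \<omega> ` {p. up_right_path x y p}"
    unfolding LPP_def by (intro Max_in) (use finite_up_right_paths in auto)
  then show ?thesis using that by auto
qed

lemma int_discrete_ivt:
  fixes h :: "nat \<Rightarrow> int"
  assumes "h 0 \<le> 0" "h N \<ge> 0" "\<And>j. j < N \<Longrightarrow> \<bar>h (Suc j) - h j\<bar> \<le> 1"
  shows "\<exists>j\<le>N. h j = 0"
  using assms
proof (induction N)
  case (Suc N)
  show ?case
  proof (cases "h N \<ge> 0")
    case True
    then show ?thesis using Suc by (metis le_Suc_eq less_SucI)
  next
    case False
    then have "h (Suc N) = 0" using Suc.prems(2) Suc.prems(3)[of N] by force
    then show ?thesis by blast
  qed
qed auto

text \<open>Paths of equal length started on a common antidiagonal stay on common antidiagonals,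
  so \<open>fst (p!j) - fst (q!j)\<close> moves by at most one per step and must vanish somewhere.\<close>

lemma up_right_paths_meet:
  assumes p: "up_right_path a y p" and q: "up_right_path c x q"
    and len: "length q = length p" and level: "fst a + snd a = fst c + snd c"
    and "fst a \<le> fst c" "fst x \<le> fst y"
  shows "\<exists>j < length p. p ! j = q ! j"
proof -
  define m where "m = length p"
  have "m \<ge> 1" using p by (cases p) (auto simp: up_right_path_def m_def)
  have ends: "p ! 0 = a" "q ! 0 = c" "p ! (m - 1) = y" "q ! (m - 1) = x"
    using p q len by (auto simp: up_right_path_def hd_conv_nth last_conv_nth m_def)
  define h where "h j = fst (p ! j) - fst (q ! j)" for j
  have "\<exists>j\<le>m - 1. h j = 0"
  proof (rule int_discrete_ivt)
    fix j assume "j < m - 1"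
    then have "Suc j < length p" by (simp add: m_def)
    then show "\<bar>h (Suc j) - h j\<bar> \<le> 1"
      using up_right_path_step[OF p, of j] up_right_path_step[OF q, of j] len
      unfolding h_def m_def by auto
  qed (use ends assms in \<open>auto simp: h_def\<close>)
  then obtain j where j: "j \<le> m - 1" "h j = 0" by blast
  then have "j < m" using \<open>m \<ge> 1\<close> by simp
  moreover have "p ! j = q ! j"
    using up_right_path_nth_level[OF p, of j] up_right_path_nth_level[OF q, of j]
      \<open>j < m\<close> len level j(2) unfolding h_def m_def by (simp add: prod_eq_iff)
  ultimately show ?thesis by (auto simp: m_def)
qed

definition switch_path :: "nat \<Rightarrow> point list \<Rightarrow> point list \<Rightarrow> point list" where
  "switch_path j p q = map (\<lambda>t. if t \<le> j then p ! t else q ! t) [0..<length p]"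

lemma up_right_path_switch_path:
  assumes p: "up_right_path a y p" and q: "up_right_path c x q"
    and len: "length q = length p" and j: "j < length p" "p ! j = q ! j"
  shows "up_right_path a x (switch_path j p q)"
proof -
  let ?r = "switch_path j p q"
  have r: "t < length p \<Longrightarrow> ?r ! t = (if t \<le> j then p ! t else q ! t)" for t
    by (simp add: switch_path_def)
  have r': "t < length p \<Longrightarrow> ?r ! t = (if t < j then p ! t else q ! t)" for t
    using r j(2) by auto
  have "p \<noteq> []" "?r \<noteq> []" using j by (auto simp: switch_path_def)
  show ?thesis unfolding up_right_path_def
  proof (intro conjI allI impI)
    show "?r \<noteq> []" by fact
    show "hd ?r = a" using r[of 0] j p \<open>?r \<noteq> []\<close> \<open>p \<noteq> []\<close>
      by (simp add: hd_conv_nth up_right_path_def)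
    show "last ?r = x"
      using r'[of "length p - 1"] j q len \<open>?r \<noteq> []\<close>
      by (auto simp: last_conv_nth up_right_path_def switch_path_def)
    fix i assume i: "Suc i < length ?r"
    then show "?r ! Suc i = (fst (?r ! i) + 1, snd (?r ! i)) \<or>
               ?r ! Suc i = (fst (?r ! i), snd (?r ! i) + 1)"
      using r[of i] r[of "Suc i"] r'[of i] r'[of "Suc i"]
        up_right_path_step[OF p, of i] up_right_path_step[OF q, of i] len
      by (cases "Suc i \<le> j") (auto simp: switch_path_def)
  qed
qed

lemma passage_time_switch_path:
  assumes "length q = length p"
  shows "passage_time \<omega> (switch_path j p q) + passage_time \<omega> (switch_path j q p)
         = passage_time \<omega> p + passage_time \<omega> q"
  using assms by (auto simp: passage_time_eq_sum switch_path_def sum.distrib[symmetric] intro!: sum.cong)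

lemma LPP_crossing:
  assumes "pt_le a y" "pt_le c x"
    and "fst a + snd a = fst c + snd c" "fst x + snd x = fst y + snd y"
    and "fst a \<le> fst c" "fst x \<le> fst y"
  shows "LPP \<omega> a y + LPP \<omega> c x \<le> LPP \<omega> a x + LPP \<omega> c y"
proof -
  obtain p where p: "up_right_path a y p" "LPP \<omega> a y = passage_time \<omega> p"
    using LPP_attained[OF assms(1)] .
  obtain q where q: "up_right_path c x q" "LPP \<omega> c x = passage_time \<omega> q"
    using LPP_attained[OF assms(2)] .
  have len: "length q = length p"
    using up_right_path_length[OF p(1)] up_right_path_length[OF q(1)] assms(3,4) by linarith
  obtain j where j: "j < length p" "p ! j = q ! j"
    using up_right_paths_meet[OF p(1) q(1) len assms(3,5,6)] by blast
  have "LPP \<omega> a y + LPP \<omega> c x = passage_time \<omega> (switch_path j p q) + passage_time \<omega> (switch_path j q p)"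
    using p(2) q(2) passage_time_switch_path[OF len] by simp
  also have "\<dots> \<le> LPP \<omega> a x + LPP \<omega> c y"
    using LPP_ge[OF up_right_path_switch_path[OF p(1) q(1) len j]]
      LPP_ge[OF up_right_path_switch_path[OF q(1) p(1) len[symmetric]]] j len
    by (simp add: add_mono)
  finally show ?thesis .
qed

lemma Cset_eq: "Cset x = {-snd x..fst x}"
  by (auto simp: Cset_def pt_le_def)

lemma Lb_ge: "j \<in> Cset x \<Longrightarrow> b j + ereal (Lk \<omega> j x) \<le> Lb \<omega> b x"
  unfolding Lb_def by (rule Max_ge) (auto simp: Cset_eq)

lemma Lb_in_image:
  "Cset x \<noteq> {} \<Longrightarrow> Lb \<omega> b x \<in> (\<lambda>k. b k + ereal (Lk \<omega> k x)) ` Cset x"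
  unfolding Lb_def by (rule Max_in) (auto simp: Cset_eq)

lemma Lb_not_infty: "profile b \<Longrightarrow> Cset x \<noteq> {} \<Longrightarrow> Lb \<omega> b x \<noteq> \<infinity>"
  using Lb_in_image[of x \<omega> b] by (auto simp: profile_def)

lemma Zb_attains:
  assumes "Cset x \<noteq> {}"
  shows "Zb \<omega> b x \<in> Cset x" "b (Zb \<omega> b x) + ereal (Lk \<omega> (Zb \<omega> b x) x) = Lb \<omega> b x"
proof -
  let ?A = "{k \<in> Cset x. b k + ereal (Lk \<omega> k x) = Lb \<omega> b x}"
  have "?A \<noteq> {}" using Lb_in_image[OF assms, of \<omega> b] by auto
  moreover have "finite ?A" by (rule finite_subset[of _ "Cset x"]) (auto simp: Cset_eq)
  ultimately have "Zb \<omega> b x \<in> ?A" unfolding Zb_def by (rule Max_in[rotated])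
  then show "Zb \<omega> b x \<in> Cset x" "b (Zb \<omega> b x) + ereal (Lk \<omega> (Zb \<omega> b x) x) = Lb \<omega> b x"
    by auto
qed

text \<open>The comparison holds for any two points \<open>x\<close> left of \<open>y\<close> on a common antidiagonal.\<close>

lemma Lb_increment_mono_exit_point:
  assumes "profile b1" "profile b2"
    and level: "fst x + snd x = fst y + snd y" "0 \<le> fst x + snd x" and "fst x \<le> fst y"
    and fin: "Lb \<omega> b1 y \<noteq> -\<infinity>" "Lb \<omega> b1 x \<noteq> -\<infinity>" "Lb \<omega> b2 y \<noteq> -\<infinity>" "Lb \<omega> b2 x \<noteq> -\<infinity>"
    and exit: "Zb \<omega> b1 y \<le> Zb \<omega> b2 x"
  shows "Lb \<omega> b1 y - Lb \<omega> b1 x \<le> Lb \<omega> b2 y - Lb \<omega> b2 x"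
proof -
  define z1 where "z1 = Zb \<omega> b1 y"
  define z2 where "z2 = Zb \<omega> b2 x"
  have ne: "Cset x \<noteq> {}" "Cset y \<noteq> {}" using level by (auto simp: Cset_eq)
  note Z1 = Zb_attains[OF ne(2), where \<omega> = \<omega> and b = b1, folded z1_def]
  note Z2 = Zb_attains[OF ne(1), where \<omega> = \<omega> and b = b2, folded z2_def]
  have "z1 \<in> Cset x" "z2 \<in> Cset y"
    using Z1(1) Z2(1) exit level \<open>fst x \<le> fst y\<close> by (auto simp: z1_def z2_def Cset_eq)
  then have mx: "b1 z1 + ereal (Lk \<omega> z1 x) \<le> Lb \<omega> b1 x" "b2 z2 + ereal (Lk \<omega> z2 y) \<le> Lb \<omega> b2 y"
    by (simp_all add: Lb_ge)
  have "Lk \<omega> z1 y + Lk \<omega> z2 x \<le> Lk \<omega> z1 x + Lk \<omega> z2 y"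
    unfolding Lk_def
    by (rule LPP_crossing) (use Z1(1) Z2(1) exit level \<open>fst x \<le> fst y\<close> in
        \<open>auto simp: z1_def z2_def Cset_def pt_le_def\<close>)
  moreover have "\<bar>b1 z1\<bar> \<noteq> \<infinity>" "\<bar>b2 z2\<bar> \<noteq> \<infinity>"
    using Z1(2) Z2(2) fin \<open>profile b1\<close> \<open>profile b2\<close> by (auto simp: profile_def)
  moreover have "\<bar>Lb \<omega> b1 x\<bar> \<noteq> \<infinity>" "\<bar>Lb \<omega> b2 y\<bar> \<noteq> \<infinity>"
    using Lb_not_infty[OF \<open>profile b1\<close> ne(1)] Lb_not_infty[OF \<open>profile b2\<close> ne(2)] fin by auto
  ultimately show ?thesis
    using mx Z1(2)[symmetric] Z2(2)[symmetric]
    by (cases "b1 z1"; cases "b2 z2"; cases "Lb \<omega> b1 x"; cases "Lb \<omega> b2 y") auto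
qed

theorem lemma1:
  fixes \<omega> :: "point \<Rightarrow> real" and b1 b2 :: "int \<Rightarrow> ereal" and k l :: int and n :: nat
  assumes "\<forall>x. 0 < \<omega> x"
    and "profile b1" and "profile b2"
    and "k \<le> l" and "n \<ge> 1"
    and "Lb \<omega> b1 (diag_pt l n) \<noteq> -\<infinity>" and "Lb \<omega> b1 (diag_pt k n) \<noteq> -\<infinity>"
    and "Lb \<omega> b2 (diag_pt l n) \<noteq> -\<infinity>" and "Lb \<omega> b2 (diag_pt k n) \<noteq> -\<infinity>"
    and "Zb \<omega> b1 (diag_pt l n) \<le> Zb \<omega> b2 (diag_pt k n)"
  shows "Lb \<omega> b1 (diag_pt l n) - Lb \<omega> b1 (diag_pt k n)
         \<le> Lb \<omega> b2 (diag_pt l n) - Lb \<omega> b2 (diag_pt k n)"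
  by (rule Lb_increment_mono_exit_point) (use assms in \<open>auto simp: diag_pt_def\<close>)

end
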